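(* Let $G$ be a finite simple undirected graph on $n\geq 3$ vertices satisfying: (a) $\delta(G)\geq \frac{n-1}{2}$; (b) $G$ has no perfect matching; (c) $G$ is triangle-free (contains no cycle of length $3$). Then $G$ is isomorphic either to the cycle $C_5$ or to the complete bipartite graph $K_{\frac{n-1}{2},\frac{n+1}{2}}$.
   Context: $\delta(G)$ denotes the minimum vertex degree of $G$. $C_5$ is the cycle on $5$ vertices. $K_{m,p}$ denotes the complete bipartite graph with parts of sizes $m$ and $p$. A triangle is a cycle of length $3$. *)

theory Defs
  imports Complex_Main
begin

definition simple_graph :: "'a set \<Rightarrow> ('a \<Rightarrow> 'a \<Rightarrow> bool) \<Rightarrow> bool" where
  "simple_graph V E \<longleftrightarrow> finite V \<and>
     (\<forall>u v. E u v \<longrightarrow> u \<in> V \<and> v \<in> V \<and> u \<noteq> v \<and> E v u)"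

definition degree :: "'a set \<Rightarrow> ('a \<Rightarrow> 'a \<Rightarrow> bool) \<Rightarrow> 'a \<Rightarrow> nat" where
  "degree V E v = card {u \<in> V. E v u}"

definition min_degree :: "'a set \<Rightarrow> ('a \<Rightarrow> 'a \<Rightarrow> bool) \<Rightarrow> nat" where
  "min_degree V E = Min ((\<lambda>v. degree V E v) ` V)"

definition perfect_matching :: "'a set \<Rightarrow> ('a \<Rightarrow> 'a \<Rightarrow> bool) \<Rightarrow> 'a set set \<Rightarrow> bool" where
  "perfect_matching V E M \<longleftrightarrow>
     (\<forall>e\<in>M. \<exists>u v. e = {u, v} \<and> E u v) \<and>
     (\<forall>e\<in>M. \<forall>f\<in>M. e \<noteq> f \<longrightarrow> e \<inter> f = {}) \<and>
     \<Union>M = V"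

definition has_perfect_matching :: "'a set \<Rightarrow> ('a \<Rightarrow> 'a \<Rightarrow> bool) \<Rightarrow> bool" where
  "has_perfect_matching V E \<longleftrightarrow> (\<exists>M. perfect_matching V E M)"

definition triangle_free :: "'a set \<Rightarrow> ('a \<Rightarrow> 'a \<Rightarrow> bool) \<Rightarrow> bool" where
  "triangle_free V E \<longleftrightarrow>
     \<not> (\<exists>u\<in>V. \<exists>v\<in>V. \<exists>w\<in>V. E u v \<and> E v w \<and> E w u)"

definition graph_iso :: "'a set \<Rightarrow> ('a \<Rightarrow> 'a \<Rightarrow> bool) \<Rightarrow> 'b set \<Rightarrow> ('b \<Rightarrow> 'b \<Rightarrow> bool) \<Rightarrow> bool" where
  "graph_iso V E V' E' \<longleftrightarrow>
     (\<exists>f. bij_betw f V V' \<and> (\<forall>u\<in>V. \<forall>v\<in>V. E u v \<longleftrightarrow> E' (f u) (f v)))"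

definition C5_V :: "nat set" where "C5_V = {0..<5}"
definition C5_E :: "nat \<Rightarrow> nat \<Rightarrow> bool" where
  "C5_E i j \<longleftrightarrow> i < 5 \<and> j < 5 \<and> (j = (i + 1) mod 5 \<or> i = (j + 1) mod 5)"

definition K_V :: "nat \<Rightarrow> nat \<Rightarrow> nat set" where "K_V m p = {0..<m+p}"
definition K_E :: "nat \<Rightarrow> nat \<Rightarrow> nat \<Rightarrow> nat \<Rightarrow> bool" where
  "K_E m p i j \<longleftrightarrow> i < m + p \<and> j < m + p \<and> ((i < m \<and> m \<le> j) \<or> (j < m \<and> m \<le> i))"

end

theory Submission
  imports Defs
begin

(* Pick an edge uv of G.  Triangle-freeness makes the neighbourhoods
   N(u) and N(v) disjoint independent sets, each of size at least (n-1)/2.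
   - If N(u) and N(v) cover V, then G is bipartite with these parts, the degree
     bound forces every cross pair to be an edge, and the parts must differ in size
     since otherwise a perfect matching exists; so G = K_{(n-1)/2,(n+1)/2}.
   - Otherwise there is exactly one further vertex w, n = 2k+1 with k = |N(u)| = |N(v)|.
     A neighbour y of w inside N(u) can only be adjacent to w and to N(v) - N(w), which
     forces |N(w) \<inter> N(v)| \<le> 1, and symmetrically; counting the neighbours of w then
     gives k = 2, and the five vertices form a C_5. *)

lemma degree_bound_of_min_degree:
  assumes "finite V" and "x \<in> V" and "real (min_degree V E) \<ge> (real n - 1) / 2"
  shows "n \<le> 2 * degree V E x + 1"
proof -
  have "min_degree V E \<le> degree V E x"
    unfolding min_degree_def using assms(1,2) by (intro Min_le) auto
  hence "(real n - 1) / 2 \<le> real (degree V E x)" using assms(3) by linarith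
  hence "real n \<le> real (2 * degree V E x + 1)" by simp
  thus ?thesis by (simp only: of_nat_le_iff)
qed

lemma perfect_matching_of_bij:
  assumes f: "bij_betw f P Q" and disj: "P \<inter> Q = {}" and cover: "P \<union> Q = V"
    and edges: "\<And>x. x \<in> P \<Longrightarrow> E x (f x)"
  shows "has_perfect_matching V E"
proof -
  define M where "M = (\<lambda>x. {x, f x}) ` P"
  have "perfect_matching V E M"
    unfolding perfect_matching_def
  proof (intro conjI ballI impI)
    show "\<exists>u v. e = {u, v} \<and> E u v" if "e \<in> M" for e
      using that edges unfolding M_def by blast
    show "e \<inter> g = {}" if eg: "e \<in> M" "g \<in> M" "e \<noteq> g" for e g
    proof -
      obtain x x' where "x \<in> P" "x' \<in> P" "e = {x, f x}" "g = {x', f x'}" "x \<noteq> x'"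
        using eg unfolding M_def by blast
      moreover have "f x \<in> Q" "f x' \<in> Q" "f x \<noteq> f x'"
        using f \<open>x \<in> P\<close> \<open>x' \<in> P\<close> \<open>x \<noteq> x'\<close> unfolding bij_betw_def inj_on_def by auto
      ultimately show ?thesis using disj by auto
    qed
    show "\<Union> M = V" using f cover unfolding M_def bij_betw_def by auto
  qed
  thus ?thesis unfolding has_perfect_matching_def by blast
qed

lemma complete_bipartite_iso:
  assumes fin: "finite V" and disj: "P \<inter> Q = {}" and cover: "P \<union> Q = V"
    and edges: "\<And>x y. E x y \<longleftrightarrow> (x \<in> P \<and> y \<in> Q) \<or> (x \<in> Q \<and> y \<in> P)"
    and m: "card P = m" and p: "card Q = p"
  shows "graph_iso V E (K_V m p) (K_E m p)"
proof -
  have fP: "finite P" and fQ: "finite Q" using fin cover by auto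
  obtain f1 where f1: "bij_betw f1 P {0..<m}"
    using finite_same_card_bij[OF fP finite_atLeastLessThan] m by force
  obtain f2 where f2: "bij_betw f2 Q {m..<m+p}"
    using finite_same_card_bij[OF fQ finite_atLeastLessThan] p by force
  define g where "g x = (if x \<in> P then f1 x else f2 x)" for x
  have gP: "bij_betw g P {0..<m}"
    using f1 by (rule bij_betw_cong[THEN iffD1, rotated]) (simp add: g_def)
  have gQ: "bij_betw g Q {m..<m+p}"
    using f2 by (rule bij_betw_cong[THEN iffD1, rotated]) (use disj in \<open>auto simp: g_def\<close>)
  have bij: "bij_betw g V (K_V m p)"
    using bij_betw_combine[OF gP gQ] cover unfolding K_V_def by (simp add: ivl_disj_un)
  have side: "(x \<in> P \<and> g x < m) \<or> (x \<in> Q \<and> m \<le> g x \<and> g x < m + p)" if "x \<in> V" for x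
    using that cover gP gQ unfolding bij_betw_def by auto
  have "E x y \<longleftrightarrow> K_E m p (g x) (g y)" if "x \<in> V" "y \<in> V" for x y
    using side[OF that(1)] side[OF that(2)] disj unfolding edges K_E_def by auto
  thus ?thesis using bij unfolding graph_iso_def by blast
qed

lemma cycle5_iso:
  assumes dist: "distinct [a, b, c, d, e]" and V: "V = {a, b, c, d, e}"
    and Ea: "\<And>x. E a x \<longleftrightarrow> x = e \<or> x = b" and Eb: "\<And>x. E b x \<longleftrightarrow> x = a \<or> x = c"
    and Ec: "\<And>x. E c x \<longleftrightarrow> x = b \<or> x = d" and Ed: "\<And>x. E d x \<longleftrightarrow> x = c \<or> x = e"
    and Ee: "\<And>x. E e x \<longleftrightarrow> x = d \<or> x = a"
  shows "graph_iso V E C5_V C5_E"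
proof -
  define g where "g x = (if x = a then 0 else if x = b then 1 else if x = c then 2
    else if x = d then (3::nat) else 4)" for x
  have "bij_betw g V C5_V"
    unfolding bij_betw_def V C5_V_def
  proof
    show "inj_on g {a, b, c, d, e}" using dist by (auto simp: g_def inj_on_def)
    show "g ` {a, b, c, d, e} = {0..<5}" using dist by (auto simp: g_def)
  qed
  moreover have "E x y \<longleftrightarrow> C5_E (g x) (g y)" if "x \<in> V" "y \<in> V" for x y
    using that dist unfolding V
    by (auto simp: Ea Eb Ec Ed Ee g_def C5_E_def)
  ultimately show ?thesis unfolding graph_iso_def by blast
qed

locale dense_triangle_free =
  fixes V :: "'a set" and E :: "'a \<Rightarrow> 'a \<Rightarrow> bool" and n :: nat
  assumes graph: "simple_graph V E" and triangle_free: "triangle_free V E"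
    and card_V: "card V = n"
    and degree_bound: "\<And>x. x \<in> V \<Longrightarrow> n \<le> 2 * degree V E x + 1"
begin

definition N :: "'a \<Rightarrow> 'a set" where "N x = {y \<in> V. E x y}"

lemma finite_V: "finite V"
  using graph unfolding simple_graph_def by blast

lemma edgeD: "E x y \<Longrightarrow> x \<in> V \<and> y \<in> V \<and> x \<noteq> y \<and> E y x"
  using graph unfolding simple_graph_def by blast

lemma N_subset: "N x \<subseteq> V"
  unfolding N_def by blast

lemma finite_N: "finite (N x)"
  using finite_subset[OF N_subset finite_V] .

lemma in_N: "y \<in> N x \<longleftrightarrow> E x y"
  unfolding N_def using edgeD by blast

lemma N_bound: "x \<in> V \<Longrightarrow> n \<le> 2 * card (N x) + 1"
  using degree_bound unfolding degree_def N_def .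

lemma no_triangle: "E x y \<Longrightarrow> E y z \<Longrightarrow> E z x \<Longrightarrow> False"
  using triangle_free edgeD unfolding triangle_free_def by blast

lemma N_independent: "y \<in> N x \<Longrightarrow> y' \<in> N x \<Longrightarrow> \<not> E y y'"
  using no_triangle edgeD in_N by blast

lemma adjacent_N_disjoint: "E u v \<Longrightarrow> N u \<inter> N v = {}"
  using no_triangle in_N edgeD by blast

text \<open>A graph bipartite with parts P, Q: the degree bound forces all cross edges, and the
  absence of a perfect matching forces |Q| = |P| + 1, so the graph is K_{(n-1)/2,(n+1)/2}.\<close>
lemma bipartite_case:
  assumes disj: "P \<inter> Q = {}" and cover: "P \<union> Q = V"
    and cross: "\<And>x y. E x y \<Longrightarrow> (x \<in> P \<and> y \<in> Q) \<or> (x \<in> Q \<and> y \<in> P)"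
    and le: "card P \<le> card Q" and n3: "n \<ge> 3"
    and no_pm: "\<not> has_perfect_matching V E"
  shows "graph_iso V E (K_V ((n - 1) div 2) ((n + 1) div 2)) (K_E ((n - 1) div 2) ((n + 1) div 2))"
proof -
  have fP: "finite P" and fQ: "finite Q" using finite_V cover by auto
  have sum: "card P + card Q = n" using card_Un_disjoint[OF fP fQ disj] cover card_V by simp
  have NQ: "N y = P" if y: "y \<in> Q" for y
  proof -
    have sub: "N y \<subseteq> P" using cross disj y in_N by blast
    have "n \<le> 2 * card (N y) + 1" using N_bound y cover by blast
    moreover have "card (N y) \<le> card P" using card_mono[OF fP sub] .
    ultimately have "card (N y) = card P" using sum le by linarith
    thus ?thesis by (rule card_subset_eq[OF fP sub])
  qed
  have edges: "E x y \<longleftrightarrow> (x \<in> P \<and> y \<in> Q) \<or> (x \<in> Q \<and> y \<in> P)" for x y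
  proof
    assume "(x \<in> P \<and> y \<in> Q) \<or> (x \<in> Q \<and> y \<in> P)"
    thus "E x y"
    proof
      assume "x \<in> P \<and> y \<in> Q"
      hence "E y x" using NQ in_N by blast
      thus "E x y" using edgeD by blast
    qed (use NQ in_N in blast)
  qed (rule cross)
  have unbalanced: "card P \<noteq> card Q"
  proof
    assume "card P = card Q"
    then obtain f where f: "bij_betw f P Q" using finite_same_card_bij[OF fP fQ] by blast
    have "E x (f x)" if "x \<in> P" for x using edges bij_betwE[OF f] that by blast
    thus False using perfect_matching_of_bij[OF f disj cover] no_pm by blast
  qed
  have "Q \<noteq> {}" using sum le n3 by auto
  then obtain y where "y \<in> Q" by blast
  have "n \<le> 2 * card P + 1" using N_bound[of y] NQ[OF \<open>y \<in> Q\<close>] \<open>y \<in> Q\<close> cover by auto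
  hence "card Q = card P + 1" using sum le unbalanced by linarith
  hence "card P = (n - 1) div 2" and "card Q = (n + 1) div 2" using sum by simp_all
  thus ?thesis using complete_bipartite_iso[OF finite_V disj cover edges] by blast
qed

text \<open>If the neighbourhoods of an edge uv cover V, they are the two sides of a bipartition.\<close>
lemma covering_edge_bipartite:
  assumes uv: "E u v" and cover: "N u \<union> N v = V" and n3: "n \<ge> 3"
    and no_pm: "\<not> has_perfect_matching V E"
  shows "graph_iso V E (K_V ((n - 1) div 2) ((n + 1) div 2)) (K_E ((n - 1) div 2) ((n + 1) div 2))"
proof -
  have disj: "N u \<inter> N v = {}" using adjacent_N_disjoint[OF uv] .
  have cross: "(x \<in> N u \<and> y \<in> N v) \<or> (x \<in> N v \<and> y \<in> N u)" if "E x y" for x y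
    using that cover edgeD N_independent by blast
  show ?thesis
  proof (cases "card (N u) \<le> card (N v)")
    case True
    show ?thesis using bipartite_case[OF disj cover cross True n3 no_pm] .
  next
    case False
    have "N v \<union> N u = V" "N v \<inter> N u = {}" using cover disj by auto
    moreover have "card (N v) \<le> card (N u)" using False by simp
    ultimately show ?thesis using bipartite_case[OF _ _ _ _ n3 no_pm] cross by blast
  qed
qed

lemma edge_missing_vertex:
  assumes uv: "E u v" and w: "w \<in> V" "w \<notin> N u" "w \<notin> N v"
  shows "card (N v) = card (N u)" and "n = 2 * card (N u) + 1"
    and "V = N u \<union> N v \<union> {w}"
proof -
  have sub: "N u \<union> N v \<subseteq> V - {w}" using N_subset w by blast
  have "card (N u) + card (N v) = card (N u \<union> N v)"
    using card_Un_disjoint[OF finite_N finite_N adjacent_N_disjoint[OF uv]] by simp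
  also have "\<dots> \<le> card (V - {w})" using card_mono[OF _ sub] finite_V by simp
  also have "\<dots> = n - 1" using w finite_V card_V by simp
  finally have "card (N u) + card (N v) \<le> n - 1" .
  moreover have "n \<le> 2 * card (N u) + 1" "n \<le> 2 * card (N v) + 1"
    using N_bound edgeD[OF uv] by auto
  moreover have "n \<noteq> 0" using w finite_V card_V card_gt_0_iff by blast
  ultimately show eq: "card (N v) = card (N u)" and n: "n = 2 * card (N u) + 1"
    by linarith+
  have "card (N u \<union> N v) = card (V - {w})"
    using \<open>card (N u) + card (N v) = card (N u \<union> N v)\<close> eq n w finite_V card_V by simp
  hence "N u \<union> N v = V - {w}" using card_subset_eq[OF _ sub] finite_V by simp
  thus "V = N u \<union> N v \<union> {w}" using w by blast
qed

lemma N_of_common_neighbour: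
  assumes uv: "E u v" and w: "w \<in> V" "w \<notin> N u" "w \<notin> N v" and y: "y \<in> N w \<inter> N u"
  shows "N y \<subseteq> (N v - N w) \<union> {w}"
proof
  fix x assume x: "x \<in> N y"
  have "x \<notin> N u" using N_independent[of y u x] y x in_N by blast
  hence "x \<in> N v \<or> x = w" using edge_missing_vertex(3)[OF uv w] x N_subset by blast
  moreover have "x \<notin> N w" using no_triangle[of w x y] x y in_N edgeD by blast
  ultimately show "x \<in> (N v - N w) \<union> {w}" by blast
qed

text \<open>Counting the neighbours of such a y: w has at most one neighbour in N(v).\<close>
lemma common_neighbours_le_1:
  assumes uv: "E u v" and w: "w \<in> V" "w \<notin> N u" "w \<notin> N v" and y: "y \<in> N w \<inter> N u"
  shows "card (N w \<inter> N v) \<le> 1"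
proof -
  have "n \<le> 2 * card (N y) + 1" using N_bound y N_subset by blast
  hence "card (N u) \<le> card (N y)" using edge_missing_vertex(2)[OF uv w] by linarith
  also have "\<dots> \<le> card ((N v - N w) \<union> {w})"
    using card_mono[OF _ N_of_common_neighbour[OF uv w y]] finite_N by simp
  also have "\<dots> \<le> card (N v - N w) + 1" using card_Un_le[of "N v - N w" "{w}"] by simp
  also have "card (N v - N w) = card (N v) - card (N w \<inter> N v)"
    using card_Diff_subset_Int[of "N v" "N w"] finite_N by (simp add: Int_commute)
  finally show ?thesis
    using edge_missing_vertex(1)[OF uv w] card_mono[OF finite_N Int_lower2[of "N w" "N v"]] by linarith
qed

text \<open>w has at least |N(u)| neighbours, all in N(u) \<union> N(v), but fewer than |N(u)| on either
  side (v and u are not among them); with the previous lemma this pins down the configuration: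
  w has exactly one neighbour on each side and |N(u)| = |N(v)| = 2.\<close>
lemma common_neighbours_singletons:
  assumes uv: "E u v" and w: "w \<in> V" "w \<notin> N u" "w \<notin> N v"
  obtains y z where "N w \<inter> N u = {y}" and "N w \<inter> N v = {z}" and "card (N u) = 2"
proof -
  define A where "A = N w \<inter> N u"
  define B where "B = N w \<inter> N v"
  have vu: "E v u" using edgeD[OF uv] by blast
  have w': "w \<in> V" "w \<notin> N v" "w \<notin> N u" using w by auto
  have sizes: "card (N v) = card (N u)" "n = 2 * card (N u) + 1"
    using edge_missing_vertex[OF uv w] by auto
  have "N w \<subseteq> A \<union> B"
    using edge_missing_vertex(3)[OF uv w] N_subset in_N edgeD unfolding A_def B_def by blast
  hence "card (N w) \<le> card (A \<union> B)"
    by (intro card_mono) (simp_all add: A_def B_def finite_N)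
  also have "\<dots> \<le> card A + card B" by (rule card_Un_le)
  finally have w_count: "card (N w) \<le> card A + card B" .
  have w_deg: "card (N u) \<le> card (N w)" using N_bound[OF w(1)] sizes(2) by linarith
  have A_lt: "card A < card (N u)"
    using w(3) uv in_N edgeD unfolding A_def by (intro psubset_card_mono finite_N) blast
  have B_lt: "card B < card (N v)"
    using w(2) vu in_N edgeD unfolding B_def by (intro psubset_card_mono finite_N) blast
  have "A \<noteq> {}" and "B \<noteq> {}" using w_count w_deg A_lt B_lt sizes(1) by auto
  then obtain y0 z0 where "y0 \<in> A" "z0 \<in> B" by blast
  have "card B \<le> 1" using common_neighbours_le_1[OF uv w] \<open>y0 \<in> A\<close>
    unfolding A_def B_def by blast
  moreover have "card A \<le> 1" using common_neighbours_le_1[OF vu w'] \<open>z0 \<in> B\<close>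
    unfolding A_def B_def by blast
  moreover have "card A \<noteq> 0" "card B \<noteq> 0"
    using \<open>A \<noteq> {}\<close> \<open>B \<noteq> {}\<close> finite_N unfolding A_def B_def by auto
  ultimately have "card A = 1" "card B = 1" "card (N u) = 2"
    using w_count w_deg A_lt B_lt sizes(1) by linarith+
  thus thesis using that card_1_singletonE unfolding A_def B_def by metis
qed

lemma missing_vertex_C5:
  assumes uv: "E u v" and w: "w \<in> V" "w \<notin> N u" "w \<notin> N v"
  shows "graph_iso V E C5_V C5_E"
proof -
  obtain y z where Ay: "N w \<inter> N u = {y}" and Bz: "N w \<inter> N v = {z}" and k: "card (N u) = 2"
    using common_neighbours_singletons[OF uv w] .
  have vu: "E v u" using edgeD[OF uv] by blast
  have V: "V = N u \<union> N v \<union> {w}" and kv: "card (N v) = card (N u)"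
    using edge_missing_vertex[OF uv w] by auto
  have y: "E u y" "E w y" and z: "E v z" "E w z" using Ay Bz in_N by auto
  have dist: "distinct [u, v, z, w, y]"
    using uv y z w in_N edgeD adjacent_N_disjoint[OF uv] by auto
  have Nu: "N u = {v, y}"
    using card_subset_eq[OF finite_N, of "{v, y}" u] k uv y dist in_N by auto
  have Nv: "N v = {u, z}"
    using card_subset_eq[OF finite_N, of "{u, z}" v] k kv vu z dist in_N by auto
  have Nw: "N w = {y, z}" using Ay Bz V w in_N edgeD by blast
  have Ny: "N y = {u, w}"
    using N_of_common_neighbour[OF uv w, of y] Ay Nv Nw y dist in_N edgeD by auto
  have Nz: "N z = {v, w}"
    using N_of_common_neighbour[OF vu, of w z] w Bz Nu Nw z dist in_N edgeD by auto
  show ?thesis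
  proof (rule cycle5_iso[OF dist])
    show "V = {u, v, z, w, y}" using V Nu Nv by auto
  qed (use Nu Nv Nw Ny Nz in_N in auto)
qed


end

theorem theorem5:
  fixes V :: "'a set" and E :: "'a \<Rightarrow> 'a \<Rightarrow> bool" and n :: nat
  assumes "simple_graph V E"
    and "card V = n" and "n \<ge> 3"
    and "real (min_degree V E) \<ge> (real n - 1) / 2"
    and "\<not> has_perfect_matching V E"
    and "triangle_free V E"
  shows "graph_iso V E C5_V C5_E \<or>
         graph_iso V E (K_V ((n - 1) div 2) ((n + 1) div 2)) (K_E ((n - 1) div 2) ((n + 1) div 2))"
proof -
  have "finite V" using assms(1) unfolding simple_graph_def by blast
  then interpret dense_triangle_free V E n
    using assms(1,2,4,6) degree_bound_of_min_degree by unfold_locales auto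
  obtain u where u: "u \<in> V" using assms(2,3) by fastforce
  have "N u \<noteq> {}" using N_bound[OF u] assms(3) by auto
  then obtain v where uv: "E u v" using in_N by blast
  show ?thesis
  proof (cases "N u \<union> N v = V")
    case True
    show ?thesis using covering_edge_bipartite[OF uv True assms(3,5)] ..
  next
    case False
    then obtain w where "w \<in> V" "w \<notin> N u" "w \<notin> N v" using N_subset by blast
    thus ?thesis using missing_vertex_C5[OF uv] by blast
  qed
qed

end
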